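(* For every integer $k\ge 5$, the adjacency matrix of the graph $W(k)$ has exactly $k-1$ nonpositive eigenvalues (counted with multiplicity).
   Context: All graphs are finite, simple and undirected. For an integer $k\ge 2$, the graph $W(k)$ on $k+\binom{k}{2}=\binom{k+1}{2}$ vertices is defined as follows. Its vertex set is $\{a_1,\dots,a_k\}\cup\{b_S : S\subseteq\{1,\dots,k\},\ |S|=2\}$. The vertices $a_1,\dots,a_k$ are pairwise adjacent (forming a complete graph $K_k$). Two vertices $b_S,b_T$ are adjacent iff $S\cap T=\emptyset$ (so these vertices form the Kneser graph $Kneser(k,2)$). A vertex $a_i$ is adjacent to $b_S$ iff $i\in S$. *)

theory Defs
  imports "Jordan_Normal_Form.Char_Poly" Complex_Main
begin

text \<open>Vertices of W(k): Inl i stands for a_i (1 \<le> i \<le> k),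
 Inr S stands for b_S (S a 2-subset of {1..k}).\<close>

definition W_vertices :: "nat \<Rightarrow> (nat + nat set) list" where
  "W_vertices k = map Inl [1..<k+1] @
     map (\<lambda>(i,j). Inr {i,j}) [(i,j). i \<leftarrow> [1..<k+1], j \<leftarrow> [i+1..<k+1]]"

fun W_adj :: "(nat + nat set) \<Rightarrow> (nat + nat set) \<Rightarrow> bool" where
  "W_adj (Inl i) (Inl j) = (i \<noteq> j)"
| "W_adj (Inr S) (Inr T) = (S \<inter> T = {})"
| "W_adj (Inl i) (Inr S) = (i \<in> S)"
| "W_adj (Inr S) (Inl i) = (i \<in> S)"

definition W_adj_mat :: "nat \<Rightarrow> real mat" where
  "W_adj_mat k = (let vs = W_vertices k; n = length vs in
     mat n n (\<lambda>(i,j). if W_adj (vs ! i) (vs ! j) then 1 else 0))"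

definition num_nonpos_eigenvalues :: "real mat \<Rightarrow> nat" where
  "num_nonpos_eigenvalues A =
     (\<Sum>x\<in>{x. poly (char_poly (map_mat complex_of_real A)) x = 0 \<and> Im x = 0 \<and> Re x \<le> 0}.
        order x (char_poly (map_mat complex_of_real A)))"

end

theory Submission
  imports Defs
begin

(* Spectrum of W(k) via an explicit eigenbasis.

   Write a weight x on {1..k} as a function on W(k) by lift alpha gamma x, with value alpha * x_i
   at a_i and gamma * (x_p + x_q) at b_{p,q}.  The adjacency operator maps lifts of the constant
   weight, and lifts of weights of total zero, to lifts again; this gives the eigenvalues
   lam_hi, lam_lo (roots of t^2 - (D + k - 1) t + (k - 1)(D - 2), D = (k-2)(k-3)/2) on the
   constant weight and mu_hi, mu_lo (roots of t^2 + (k - 2) t - 1) on each of the k - 1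
   Helmert weights.  Functions on the pairs whose sums over every star vanish (the incidence
   kernel) are eigenvectors with eigenvalue 1; explicit cycle vectors give C(k,2) - k of them.
   Indexing these
   k + C(k,2) vectors by the vertices, the lifts are pairwise orthogonal and orthogonal to the
   cycle vectors, which form a unit matrix on the remaining coordinates, so the family is a basis.
   For k >= 5 only mu_lo is nonpositive, with multiplicity k - 1. *)

lemma char_poly_diagonalized:
  fixes A P :: "'a::field mat"
  assumes A: "A \<in> carrier_mat n n" and P: "P \<in> carrier_mat n n" and dP: "det P \<noteq> 0"
    and AP: "A * P = P * mat n n (\<lambda>(i,j). if i = j then d i else 0)"
  shows "char_poly A = (\<Prod>i<n. [:- d i, 1:])"
proof -
  define D where "D = mat n n (\<lambda>(i,j). if i = j then d i else (0::'a))"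
  have D: "D \<in> carrier_mat n n" unfolding D_def by simp
  from det_non_zero_imp_unit[OF P dP, of "()"]
  obtain Q where Q: "Q \<in> carrier_mat n n" "Q * P = 1\<^sub>m n" "P * Q = 1\<^sub>m n"
    unfolding Units_def by (auto simp: ring_mat_def)
  have "A = A * (P * Q)" using A Q by simp
  also have "\<dots> = (A * P) * Q" using A P Q by (simp add: assoc_mult_mat)
  also have "\<dots> = P * D * Q" using AP D_def by simp
  finally have "A = P * D * Q" .
  hence "similar_mat A D" unfolding similar_mat_def similar_mat_wit_def Let_def
    using A P Q D by (intro exI[of _ P] exI[of _ Q]) auto
  hence "char_poly A = char_poly D" by (rule char_poly_similar)
  also have "\<dots> = (\<Prod>a \<leftarrow> diag_mat D. [:- a, 1:])"
    by (rule char_poly_upper_triangular[OF D]) (auto simp: upper_triangular_def D_def)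
  also have "diag_mat D = map d [0..<n]" unfolding diag_mat_def D_def
    by (auto intro!: nth_equalityI)
  also have "(\<Prod>a \<leftarrow> map d [0..<n]. [:- a, 1:]) = (\<Prod>i<n. [:- d i, 1:])"
    by (induction n) (auto simp: lessThan_Suc mult.commute)
  finally show ?thesis .
qed

lemma order_prod_linear_factors:
  fixes d :: "'b \<Rightarrow> 'a::idom"
  assumes "finite I"
  shows "order x (\<Prod>i\<in>I. [:- d i, 1:]) = card {i\<in>I. d i = x}"
  using assms
proof (induction I rule: finite_induct)
  case empty then show ?case by simp
next
  case (insert j I)
  have ne: "(\<Prod>i\<in>I. [:- d i, 1:]) \<noteq> 0" using insert by (simp add: prod_zero_iff)
  have "order x (\<Prod>i\<in>insert j I. [:- d i, 1:])
      = order x [:- d j, 1:] + order x (\<Prod>i\<in>I. [:- d i, 1:])"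
    unfolding prod.insert[OF insert(1,2)] using ne
    by (intro order_mult) (simp only: mult_eq_0_iff de_Morgan_disj, simp)
  also have "order x [:- d j, 1:] = (if d j = x then 1 else 0)"
    using order_power_n_n[of x 1] by (auto intro: order_0I)
  moreover have "{i\<in>insert j I. d i = x}
      = (if d j = x then insert j {i\<in>I. d i = x} else {i\<in>I. d i = x})"
    by auto
  ultimately show ?case using insert by auto
qed

lemma num_nonpos_eigenvalues_diagonalized:
  fixes A P :: "real mat"
  assumes A: "A \<in> carrier_mat n n" and P: "P \<in> carrier_mat n n" and dP: "det P \<noteq> 0"
    and AP: "A * P = P * mat n n (\<lambda>(i,j). if i = j then d i else 0)"
  shows "num_nonpos_eigenvalues A = card {i\<in>{..<n}. d i \<le> 0}"
proof -
  define e where "e i = complex_of_real (d i)" for i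
  let ?c = "map_mat complex_of_real"
  have "?c A * ?c P = ?c (A * P)"
    using A P by (simp add: of_real_hom.mat_hom_mult)
  also have "\<dots> = ?c P * ?c (mat n n (\<lambda>(i,j). if i = j then d i else 0))"
    unfolding AP using P by (intro of_real_hom.mat_hom_mult) auto
  also have "?c (mat n n (\<lambda>(i,j). if i = j then d i else 0))
      = mat n n (\<lambda>(i,j). if i = j then e i else 0)"
    unfolding e_def by (rule eq_matI) auto
  finally have "char_poly (?c A) = (\<Prod>i<n. [:- e i, 1:])"
    using A P dP by (intro char_poly_diagonalized[of _ n "?c P"]) (auto simp: of_real_hom.hom_det)
  moreover define p where "p = (\<Prod>i<n. [:- e i, 1:])"
  moreover define R where "R = {x. poly p x = 0 \<and> Im x = 0 \<and> Re x \<le> 0}"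
  ultimately have "num_nonpos_eigenvalues A = (\<Sum>x\<in>R. order x p)"
    unfolding num_nonpos_eigenvalues_def by simp
  also have "\<dots> = (\<Sum>x\<in>R. card {i\<in>{..<n}. e i = x})"
    unfolding p_def by (intro sum.cong refl order_prod_linear_factors) simp
  also have "\<dots> = card (\<Union>x\<in>R. {i\<in>{..<n}. e i = x})"
  proof (rule card_UN_disjoint[symmetric])
    have "p \<noteq> 0" unfolding p_def by (simp add: prod_zero_iff)
    then have "finite {x. poly p x = 0}" by (rule poly_roots_finite)
    then show "finite R" unfolding R_def by (rule finite_subset[rotated]) auto
  qed auto
  also have "(\<Union>x\<in>R. {i\<in>{..<n}. e i = x}) = {i\<in>{..<n}. d i \<le> 0}"
  proof -
    have "poly p (e i) = 0" if "i < n" for i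
      unfolding p_def poly_prod using that by (intro prod_zero[of "{..<n}"]) auto
    thus ?thesis unfolding R_def e_def by auto
  qed
  finally show ?thesis .
qed

lemma sum_over_positions:
  assumes "distinct vs"
  shows "(\<Sum>l\<in>{0..<length vs}. g (vs ! l)) = (\<Sum>w\<in>set vs. g w)"
proof -
  have "set vs = (\<lambda>l. vs ! l) ` {0..<length vs}" by (auto simp: in_set_conv_nth)
  moreover have "inj_on (\<lambda>l. vs ! l) {0..<length vs}"
    using assms by (auto simp: inj_on_def nth_eq_iff_index_eq)
  ultimately show ?thesis by (simp add: sum.reindex)
qed

lemma det_nonzero_if_independent:
  fixes f :: "'v \<Rightarrow> 'v \<Rightarrow> 'a::field"
  assumes dist: "distinct vs"
    and indep: "\<And>c. \<forall>v\<in>set vs. (\<Sum>u\<in>set vs. c u * f u v) = 0 \<Longrightarrow> \<forall>u\<in>set vs. c u = 0"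
  shows "det (mat (length vs) (length vs) (\<lambda>(i,j). f (vs ! j) (vs ! i))) \<noteq> 0"
    (is "det ?P \<noteq> 0")
proof
  let ?n = "length vs"
  assume "det ?P = 0"
  then obtain x where x: "x \<in> carrier_vec ?n" "x \<noteq> 0\<^sub>v ?n" "?P *\<^sub>v x = 0\<^sub>v ?n"
    using det_0_iff_vec_prod_zero[of ?P ?n] by auto
  have inj: "inj_on (\<lambda>l. vs ! l) {0..<?n}"
    using dist by (auto simp: inj_on_def nth_eq_iff_index_eq)
  define c where "c u = x $ (inv_into {0..<?n} (\<lambda>l. vs ! l) u)" for u
  have c_nth: "c (vs ! j) = x $ j" if "j < ?n" for j
    unfolding c_def using inv_into_f_f[OF inj] that by simp
  have "\<forall>w\<in>set vs. (\<Sum>u\<in>set vs. c u * f u w) = 0"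
  proof
    fix w assume "w \<in> set vs"
    then obtain i where i: "i < ?n" "vs ! i = w" by (metis in_set_conv_nth)
    have "(\<Sum>u\<in>set vs. c u * f u w) = (\<Sum>l\<in>{0..<?n}. c (vs ! l) * f (vs ! l) w)"
      by (rule sum_over_positions[OF dist, symmetric])
    also have "\<dots> = (?P *\<^sub>v x) $ i"
      using i x(1) by (auto simp: scalar_prod_def c_nth mult.commute intro!: sum.cong)
    also have "\<dots> = 0" using x i by simp
    finally show "(\<Sum>u\<in>set vs. c u * f u w) = 0" .
  qed
  hence "\<forall>u\<in>set vs. c u = 0" by (rule indep)
  hence "x = 0\<^sub>v ?n" using x(1) c_nth by (intro eq_vecI) auto
  thus False using x by simp
qed

lemma num_nonpos_eigenvalues_eigenbasis:
  fixes a f :: "'v \<Rightarrow> 'v \<Rightarrow> real" and ev :: "'v \<Rightarrow> real"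
  assumes dist: "distinct vs"
    and eigen: "\<And>u v. u \<in> set vs \<Longrightarrow> v \<in> set vs \<Longrightarrow>
                  (\<Sum>w\<in>set vs. a v w * f u w) = ev u * f u v"
    and indep: "\<And>c. \<forall>v\<in>set vs. (\<Sum>u\<in>set vs. c u * f u v) = 0 \<Longrightarrow> \<forall>u\<in>set vs. c u = 0"
  shows "num_nonpos_eigenvalues (mat (length vs) (length vs) (\<lambda>(i,j). a (vs ! i) (vs ! j)))
       = card {u\<in>set vs. ev u \<le> 0}"
proof -
  define n where "n = length vs"
  define A where "A = mat n n (\<lambda>(i,j). a (vs ! i) (vs ! j))"
  define P where "P = mat n n (\<lambda>(i,j). f (vs ! j) (vs ! i))"
  define D where "D = mat n n (\<lambda>(i,j). if i = j then ev (vs ! i) else 0)"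
  have vs: "vs ! i \<in> set vs" if "i < n" for i using that n_def by simp
  have AP: "A * P = P * D"
  proof (rule eq_matI)
    fix i j assume "i < dim_row (P * D)" "j < dim_col (P * D)"
    hence i: "i < n" and j: "j < n" by (auto simp: P_def D_def)
    have "(A * P) $$ (i,j) = (\<Sum>l\<in>{0..<n}. a (vs ! i) (vs ! l) * f (vs ! j) (vs ! l))"
      using i j unfolding A_def P_def by (simp add: scalar_prod_def)
    also have "\<dots> = ev (vs ! j) * f (vs ! j) (vs ! i)"
      using sum_over_positions[OF dist, of "\<lambda>w. a (vs ! i) w * f (vs ! j) w"]
        eigen[OF vs[OF j] vs[OF i]] by (simp add: n_def)
    also have "\<dots> = (\<Sum>l\<in>{0..<n}. P $$ (i,l) * (if l = j then ev (vs ! l) else 0))"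
      using i j unfolding P_def by (simp add: if_distrib cong: if_cong)
    also have "\<dots> = (P * D) $$ (i,j)" using i j unfolding P_def D_def by (simp add: scalar_prod_def)
    finally show "(A * P) $$ (i,j) = (P * D) $$ (i,j)" .
  qed (auto simp: A_def P_def D_def)
  have "det P \<noteq> 0" unfolding P_def n_def by (rule det_nonzero_if_independent[OF dist indep])
  hence "num_nonpos_eigenvalues A = card {i\<in>{..<n}. ev (vs ! i) \<le> 0}"
    using AP unfolding D_def by (intro num_nonpos_eigenvalues_diagonalized) (auto simp: A_def P_def)
  also have "\<dots> = card ((\<lambda>i. vs ! i) ` {i\<in>{..<n}. ev (vs ! i) \<le> 0})"
    using dist by (intro card_image[symmetric]) (auto simp: inj_on_def nth_eq_iff_index_eq n_def)
  also have "(\<lambda>i. vs ! i) ` {i\<in>{..<n}. ev (vs ! i) \<le> 0} = {u\<in>set vs. ev u \<le> 0}"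
    unfolding n_def by (auto simp: in_set_conv_nth)
  finally show ?thesis unfolding A_def n_def .
qed

lemma independent_if_orthogonal_or_unit:
  fixes f :: "'v \<Rightarrow> 'v \<Rightarrow> real"
  assumes orth: "\<And>u w. u \<in> V \<Longrightarrow> w \<in> V \<Longrightarrow> G u \<Longrightarrow> u \<noteq> w \<Longrightarrow> (\<Sum>v\<in>V. f u v * f w v) = 0"
    and pos: "\<And>u. u \<in> V \<Longrightarrow> G u \<Longrightarrow> (\<Sum>v\<in>V. f u v * f u v) > 0"
    and unit: "\<And>u w. u \<in> V \<Longrightarrow> w \<in> V \<Longrightarrow> \<not> G u \<Longrightarrow> \<not> G w \<Longrightarrow> f w u = (if u = w then 1 else 0)"
    and comb: "\<forall>v\<in>V. (\<Sum>u\<in>V. c u * f u v) = 0"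
    and fin: "finite V"
  shows "\<forall>u\<in>V. c u = 0"
proof -
  have G0: "c u = 0" if u: "u \<in> V" "G u" for u
  proof -
    have "0 = (\<Sum>v\<in>V. f u v * (\<Sum>w\<in>V. c w * f w v))" using comb by simp
    also have "\<dots> = (\<Sum>w\<in>V. c w * (\<Sum>v\<in>V. f u v * f w v))"
      unfolding sum_distrib_left by (subst sum.swap) (simp add: mult_ac)
    also have "\<dots> = c u * (\<Sum>v\<in>V. f u v * f u v)
        + (\<Sum>w\<in>V - {u}. c w * (\<Sum>v\<in>V. f u v * f w v))"
      by (rule sum.remove[OF fin u(1)])
    also have "(\<Sum>w\<in>V - {u}. c w * (\<Sum>v\<in>V. f u v * f w v)) = 0"
      using u orth by (intro sum.neutral) auto
    finally show "c u = 0" using pos[OF u] by simp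
  qed
  show ?thesis
  proof
    fix u assume u: "u \<in> V"
    show "c u = 0"
    proof (cases "G u")
      case True thus ?thesis using G0 u by blast
    next
      case False
      have "0 = (\<Sum>w\<in>V. c w * f w u)" using comb u by simp
      also have "\<dots> = c u * f u u + (\<Sum>w\<in>V - {u}. c w * f w u)"
        by (rule sum.remove[OF fin u])
      also have "(\<Sum>w\<in>V - {u}. c w * f w u) = 0"
        using G0 unit[OF u _ False] by (intro sum.neutral) (metis DiffE insertI1 mult_eq_0_iff)
      also have "f u u = 1" using unit[OF u u False False] by simp
      finally show ?thesis by simp
    qed
  qed
qed

definition upper_root :: "real \<Rightarrow> real \<Rightarrow> real" where
  "upper_root b c = (b + sqrt (b\<^sup>2 - 4 * c)) / 2"

definition lower_root :: "real \<Rightarrow> real \<Rightarrow> real" where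
  "lower_root b c = (b - sqrt (b\<^sup>2 - 4 * c)) / 2"

lemma roots_sum: "upper_root b c + lower_root b c = b"
  unfolding upper_root_def lower_root_def by (simp add: field_simps)

lemma roots_prod:
  assumes "4 * c \<le> b\<^sup>2"
  shows "upper_root b c * lower_root b c = c"
proof -
  have "sqrt (b\<^sup>2 - 4 * c) ^ 2 = b\<^sup>2 - 4 * c" using assms by simp
  thus ?thesis unfolding upper_root_def lower_root_def by (simp add: power2_eq_square algebra_simps)
qed

lemma root_equation:
  assumes "4 * c \<le> b\<^sup>2" and "r = upper_root b c \<or> r = lower_root b c"
  shows "r\<^sup>2 - b * r + c = 0"
proof -
  have "(r - upper_root b c) * (r - lower_root b c)
      = r\<^sup>2 - (upper_root b c + lower_root b c) * r + upper_root b c * lower_root b c"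
    by (simp add: power2_eq_square algebra_simps)
  also have "\<dots> = r\<^sup>2 - b * r + c" by (simp only: roots_sum roots_prod[OF assms(1)])
  finally show ?thesis using assms(2) by auto
qed

lemma lower_le_upper_root: "4 * c \<le> b\<^sup>2 \<Longrightarrow> lower_root b c \<le> upper_root b c"
  unfolding upper_root_def lower_root_def by simp

lemma roots_pos:
  assumes "0 < b" "0 < c" "4 * c \<le> b\<^sup>2"
  shows "0 < lower_root b c" "0 < upper_root b c"
proof -
  show "0 < lower_root b c"
  proof (rule ccontr)
    assume "\<not> 0 < lower_root b c"
    moreover have "0 < upper_root b c" using roots_sum[of b c] \<open>\<not> 0 < lower_root b c\<close> assms(1) by linarith
    ultimately have "upper_root b c * lower_root b c \<le> 0" by (simp add: mult_nonneg_nonpos)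
    thus False using roots_prod[OF assms(3)] assms(2) by simp
  qed
  thus "0 < upper_root b c" using lower_le_upper_root[OF assms(3)] by linarith
qed

lemma roots_sign:
  assumes "c < 0"
  shows "lower_root b c < 0" "0 < upper_root b c"
proof -
  have "4 * c \<le> b\<^sup>2" using assms zero_le_power2[of b] by linarith
  hence "upper_root b c * lower_root b c < 0" using roots_prod assms by simp
  thus "lower_root b c < 0" "0 < upper_root b c"
    using lower_le_upper_root[OF \<open>4 * c \<le> b\<^sup>2\<close>] by (auto simp: mult_less_0_iff)
qed

definition pairs :: "nat \<Rightarrow> nat set set" where
  "pairs k = {S. S \<subseteq> {1..k} \<and> card S = 2}"

lemma finite_pairs [simp]: "finite (pairs k)"
  unfolding pairs_def by (rule finite_subset[of _ "Pow {1..k}"]) auto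

lemma pairs_iff: "S \<in> pairs k \<longleftrightarrow> (\<exists>p q. S = {p,q} \<and> 1 \<le> p \<and> p < q \<and> q \<le> k)"
proof
  assume "S \<in> pairs k"
  then obtain a b where S: "S = {a,b}" "a \<noteq> b" "S \<subseteq> {1..k}"
    unfolding pairs_def by (auto simp: card_2_iff)
  show "\<exists>p q. S = {p,q} \<and> 1 \<le> p \<and> p < q \<and> q \<le> k"
  proof (cases "a < b")
    case True then show ?thesis using S by (intro exI[of _ a] exI[of _ b]) auto
  next
    case False then show ?thesis using S by (intro exI[of _ b] exI[of _ a]) auto
  qed
next
  assume "\<exists>p q. S = {p,q} \<and> 1 \<le> p \<and> p < q \<and> q \<le> k"
  then show "S \<in> pairs k" unfolding pairs_def by auto
qed

lemma pair_in_pairs: "1 \<le> p \<Longrightarrow> p < q \<Longrightarrow> q \<le> k \<Longrightarrow> {p,q} \<in> pairs k"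
  unfolding pairs_iff by blast

lemma pairs_with_1:
  assumes "S \<in> pairs k" "1 \<in> S"
  shows "S = {1, Max S}" "2 \<le> Max S" "Max S \<le> k"
proof -
  obtain p q where pq: "S = {p,q}" "1 \<le> p" "p < q" "q \<le> k" using assms by (auto simp: pairs_iff)
  have "p = 1" using pq assms by auto
  thus "S = {1, Max S}" "2 \<le> Max S" "Max S \<le> k" using pq by auto
qed

lemma pairs_without_1:
  assumes "S \<in> pairs k" "1 \<notin> S"
  shows "S = {Min S, Max S}" "2 \<le> Min S" "Min S < Max S" "Max S \<le> k"
proof -
  obtain p q where pq: "S = {p,q}" "1 \<le> p" "p < q" "q \<le> k" using assms by (auto simp: pairs_iff)
  have "p \<noteq> 1" using pq assms by auto
  thus "S = {Min S, Max S}" "2 \<le> Min S" "Min S < Max S" "Max S \<le> k" using pq by auto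
qed

lemma pairs_containing:
  assumes i: "i \<in> {1..k}"
  shows "{S \<in> pairs k. i \<in> S} = (\<lambda>j. {i,j}) ` ({1..k} - {i})"
proof (rule equalityI; rule subsetI)
  fix S assume "S \<in> {S \<in> pairs k. i \<in> S}"
  then obtain p q where S: "S = {p,q}" "1 \<le> p" "p < q" "q \<le> k" "i \<in> S" by (auto simp: pairs_iff)
  show "S \<in> (\<lambda>j. {i,j}) ` ({1..k} - {i})"
  proof (cases "i = p")
    case True then show ?thesis using S by (intro image_eqI[of _ _ q]) auto
  next
    case False then show ?thesis using S by (intro image_eqI[of _ _ p]) auto
  qed
next
  fix S assume "S \<in> (\<lambda>j. {i,j}) ` ({1..k} - {i})"
  then show "S \<in> {S \<in> pairs k. i \<in> S}" using i unfolding pairs_def by auto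
qed

lemma sum_pairs_containing:
  assumes "i \<in> {1..k}"
  shows "(\<Sum>S\<in>{S \<in> pairs k. i \<in> S}. g S) = (\<Sum>j\<in>{1..k} - {i}. g {i,j})"
  unfolding pairs_containing[OF assms]
  by (subst sum.reindex) (auto simp: inj_on_def doubleton_eq_iff)

lemma card_pairs_containing:
  assumes "i \<in> {1..k}"
  shows "card {S \<in> pairs k. i \<in> S} = k - 1"
  unfolding pairs_containing[OF assms] using assms
  by (subst card_image) (auto simp: inj_on_def doubleton_eq_iff)

lemma sum_pairs_disjoint:
  assumes S: "S = {p,q}" "p \<noteq> q" "S \<in> pairs k"
  shows "(\<Sum>T\<in>{T\<in>pairs k. S \<inter> T = {}}. (g T::real)) =
     (\<Sum>T\<in>pairs k. g T) - (\<Sum>T\<in>{T\<in>pairs k. p \<in> T}. g T) - (\<Sum>T\<in>{T\<in>pairs k. q \<in> T}. g T) + g S"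
proof -
  let ?A = "{T\<in>pairs k. p \<in> T}" and ?B = "{T\<in>pairs k. q \<in> T}" and ?D = "{T\<in>pairs k. S \<inter> T = {}}"
  have AB: "?A \<inter> ?B = {S}"
  proof
    show "?A \<inter> ?B \<subseteq> {S}"
    proof
      fix T assume "T \<in> ?A \<inter> ?B"
      hence "S \<subseteq> T" "card T = 2" "finite T" using S by (auto simp: pairs_def card_ge_0_finite)
      moreover have "card S = 2" using S by simp
      ultimately have "S = T" by (simp add: card_subset_eq)
      thus "T \<in> {S}" by simp
    qed
    show "{S} \<subseteq> ?A \<inter> ?B" using S by auto
  qed
  have U: "pairs k = ?D \<union> (?A \<union> ?B)" using S by auto
  have "(\<Sum>T\<in>pairs k. g T) = (\<Sum>T\<in>?D. g T) + (\<Sum>T\<in>?A \<union> ?B. g T)"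
    by (subst U, rule sum.union_disjoint) (use S in auto)
  moreover have "(\<Sum>T\<in>?A \<union> ?B. g T) + (\<Sum>T\<in>?A \<inter> ?B. g T) = (\<Sum>T\<in>?A. g T) + (\<Sum>T\<in>?B. g T)"
    by (rule sum.union_inter) auto
  ultimately show ?thesis using AB by simp
qed

definition psum :: "(nat \<Rightarrow> real) \<Rightarrow> nat set \<Rightarrow> real" where
  "psum x S = (\<Sum>t\<in>S. x t)"

definition total :: "nat \<Rightarrow> (nat \<Rightarrow> real) \<Rightarrow> real" where
  "total k x = (\<Sum>t\<in>{1..k}. x t)"

lemma sum_psum_swap:
  "(\<Sum>S\<in>pairs k. psum x S * g S) = (\<Sum>t\<in>{1..k}. x t * (\<Sum>S\<in>{S\<in>pairs k. t \<in> S}. g S))"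
proof -
  have "(\<Sum>S\<in>pairs k. psum x S * g S) = (\<Sum>S\<in>pairs k. \<Sum>t\<in>{1..k}. if t \<in> S then x t * g S else 0)"
  proof (rule sum.cong[OF refl])
    fix S assume "S \<in> pairs k"
    hence "S \<subseteq> {1..k}" unfolding pairs_def by simp
    have "psum x S * g S = (\<Sum>t\<in>S. x t * g S)" unfolding psum_def by (simp add: sum_distrib_right)
    also have "\<dots> = (\<Sum>t\<in>{1..k}. if t \<in> S then x t * g S else 0)"
      using \<open>S \<subseteq> {1..k}\<close> by (intro sum.mono_neutral_cong_left) auto
    finally show "psum x S * g S = (\<Sum>t\<in>{1..k}. if t \<in> S then x t * g S else 0)" .
  qed
  also have "\<dots> = (\<Sum>t\<in>{1..k}. \<Sum>S\<in>pairs k. if t \<in> S then x t * g S else 0)" by (rule sum.swap)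
  also have "\<dots> = (\<Sum>t\<in>{1..k}. x t * (\<Sum>S\<in>{S\<in>pairs k. t \<in> S}. g S))"
    by (intro sum.cong refl) (simp add: sum.inter_filter[symmetric] sum_distrib_left)
  finally show ?thesis .
qed

(* Summing pair weights over the star of i: x i is counted k - 1 times, every other x j once. *)
lemma sum_psum_containing:
  assumes i: "i \<in> {1..k}"
  shows "(\<Sum>S\<in>{S \<in> pairs k. i \<in> S}. psum x S) = (real k - 2) * x i + total k x"
proof -
  have "(\<Sum>S\<in>{S \<in> pairs k. i \<in> S}. psum x S) = (\<Sum>j\<in>{1..k} - {i}. x i + x j)"
    unfolding sum_pairs_containing[OF i] by (intro sum.cong refl) (auto simp: psum_def)
  also have "\<dots> = real (k - 1) * x i + (total k x - x i)"
    using i by (simp add: sum.distrib total_def sum_diff1)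
  also have "\<dots> = (real k - 2) * x i + total k x" using i by (simp add: of_nat_diff algebra_simps)
  finally show ?thesis .
qed

(* Every point lies in k - 1 pairs. *)
lemma sum_psum: "(\<Sum>S\<in>pairs k. psum x S) = (real k - 1) * total k x"
proof -
  have "(\<Sum>S\<in>pairs k. psum x S) = (\<Sum>t\<in>{1..k}. x t * real (card {S\<in>pairs k. t \<in> S}))"
    using sum_psum_swap[where g = "\<lambda>_. 1"] by simp
  also have "\<dots> = (\<Sum>t\<in>{1..k}. (real k - 1) * x t)"
    by (intro sum.cong refl) (simp add: card_pairs_containing of_nat_diff)
  finally show ?thesis by (simp add: total_def sum_distrib_left)
qed

definition W_set :: "nat \<Rightarrow> (nat + nat set) set" where
  "W_set k = Inl ` {1..k} \<union> Inr ` pairs k"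

lemma finite_W_set [simp]: "finite (W_set k)"
  unfolding W_set_def by simp

lemma W_set_cases:
  assumes "v \<in> W_set k"
  obtains (a) i where "v = Inl i" "i \<in> {1..k}" | (b) S where "v = Inr S" "S \<in> pairs k"
  using assms unfolding W_set_def by auto

lemma sum_W_set: "(\<Sum>v\<in>W_set k. g v) = (\<Sum>i\<in>{1..k}. g (Inl i)) + (\<Sum>S\<in>pairs k. g (Inr S))"
  unfolding W_set_def by (subst sum.union_disjoint) (auto simp: sum.reindex)

definition adj01 :: "(nat + nat set) \<Rightarrow> (nat + nat set) \<Rightarrow> real" where
  "adj01 v w = (if W_adj v w then 1 else 0)"

definition W_apply :: "nat \<Rightarrow> ((nat + nat set) \<Rightarrow> real) \<Rightarrow> (nat + nat set) \<Rightarrow> real" where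
  "W_apply k f v = (\<Sum>w\<in>W_set k. adj01 v w * f w)"

(* The function on W(k) built from a weight x on {1..k}: alpha x_i at a_i and
   gamma (x_p + x_q) at b_{p,q}.  All eigenvectors outside the incidence kernel are of this form. *)
definition lift :: "real \<Rightarrow> real \<Rightarrow> (nat \<Rightarrow> real) \<Rightarrow> (nat + nat set) \<Rightarrow> real" where
  "lift \<alpha> \<gamma> x v = (case v of Inl i \<Rightarrow> \<alpha> * x i | Inr S \<Rightarrow> \<gamma> * psum x S)"

(* The adjacency operator on a lift, evaluated at a_i (neighbours: the other a_j and the pairs
   through i) and at b_S (neighbours: the points of S and the pairs disjoint from S). *)
lemma W_apply_lift_Inl:
  assumes i: "i \<in> {1..k}"
  shows "W_apply k (lift \<alpha> \<gamma> x) (Inl i)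
       = \<alpha> * (total k x - x i) + \<gamma> * ((real k - 2) * x i + total k x)"
proof -
  have "W_apply k (lift \<alpha> \<gamma> x) (Inl i)
      = \<alpha> * (\<Sum>j\<in>{1..k}. if i \<noteq> j then x j else 0) + \<gamma> * (\<Sum>S\<in>{S\<in>pairs k. i \<in> S}. psum x S)"
    unfolding W_apply_def sum_W_set
    by (simp add: adj01_def lift_def sum_distrib_left[symmetric] sum.inter_filter[symmetric]
        if_distrib[of "\<lambda>r. r * _"] cong: if_cong)
  also have "(\<Sum>j\<in>{1..k}. if i \<noteq> j then x j else 0) = (\<Sum>j\<in>{1..k} - {i}. x j)"
    by (rule sum.mono_neutral_cong_right) auto
  also have "\<dots> = total k x - x i" using i by (simp add: total_def sum_diff1)
  finally show ?thesis using i by (simp only: sum_psum_containing)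
qed

lemma W_apply_lift_Inr:
  assumes S: "S \<in> pairs k"
  shows "W_apply k (lift \<alpha> \<gamma> x) (Inr S) = \<alpha> * psum x S + \<gamma> * (real k - 3) * (total k x - psum x S)"
proof -
  obtain p q where pq: "S = {p,q}" "1 \<le> p" "p < q" "q \<le> k" using S by (auto simp: pairs_iff)
  have "W_apply k (lift \<alpha> \<gamma> x) (Inr S)
      = \<alpha> * (\<Sum>j\<in>{1..k}. if j \<in> S then x j else 0) + \<gamma> * (\<Sum>T\<in>{T\<in>pairs k. S \<inter> T = {}}. psum x T)"
    unfolding W_apply_def sum_W_set
    by (simp add: adj01_def lift_def sum_distrib_left[symmetric] sum.inter_filter[symmetric]
        if_distrib[of "\<lambda>r. r * _"] cong: if_cong)
  also have "(\<Sum>j\<in>{1..k}. if j \<in> S then x j else 0) = psum x S"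
    unfolding psum_def using pq by (intro sum.mono_neutral_cong_right) auto
  also have "(\<Sum>T\<in>{T\<in>pairs k. S \<inter> T = {}}. psum x T)
      = (real k - 1) * total k x - ((real k - 2) * x p + total k x) - ((real k - 2) * x q + total k x) + psum x S"
    unfolding sum_pairs_disjoint[OF pq(1) _ S, OF less_imp_neq[OF pq(3)]] sum_psum
    using pq by (simp add: sum_psum_containing)
  finally show ?thesis using pq by (simp add: psum_def algebra_simps)
qed

(* Number of pairs disjoint from a fixed pair, i.e. the degree of the Kneser graph. *)
definition kneser_deg :: "nat \<Rightarrow> real" where
  "kneser_deg k = (real k - 2) * (real k - 3) / 2"

lemma lift_ones_eigen:
  assumes ev: "ev\<^sup>2 - (kneser_deg k + real k - 1) * ev + (real k - 1) * (kneser_deg k - 2) = 0"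
    and v: "v \<in> W_set k"
  shows "W_apply k (lift (ev - kneser_deg k) 1 (\<lambda>_. 1)) v = ev * lift (ev - kneser_deg k) 1 (\<lambda>_. 1) v"
  using v
proof (cases rule: W_set_cases)
  case (a i)
  have "(ev - kneser_deg k) * (real k - 1) + ((real k - 2) + real k) = ev * (ev - kneser_deg k)"
    using ev by (simp add: algebra_simps power2_eq_square)
  thus ?thesis using a by (simp add: W_apply_lift_Inl total_def lift_def)
next
  case (b S)
  have "psum (\<lambda>_. 1) S = 2" using b by (simp add: psum_def pairs_def)
  moreover have "(ev - kneser_deg k) * 2 + (real k - 3) * (real k - 2) = ev * 2"
    unfolding kneser_deg_def by (simp add: field_simps)
  ultimately show ?thesis using b by (simp add: W_apply_lift_Inr total_def lift_def algebra_simps)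
qed

lemma lift_total_zero_eigen:
  assumes x: "total k x = 0" and ev: "ev\<^sup>2 + (real k - 2) * ev = 1" and v: "v \<in> W_set k"
  shows "W_apply k (lift (ev + real k - 3) 1 x) v = ev * lift (ev + real k - 3) 1 x v"
  using v
proof (cases rule: W_set_cases)
  case (a i)
  have "(ev + real k - 3) * (0 - x i) + (real k - 2) * x i - ev * ((ev + real k - 3) * x i)
      = (1 - (ev\<^sup>2 + (real k - 2) * ev)) * x i"
    by (simp add: algebra_simps power2_eq_square)
  hence "(ev + real k - 3) * (0 - x i) + (real k - 2) * x i = ev * ((ev + real k - 3) * x i)"
    using ev by simp
  thus ?thesis using a x by (simp add: W_apply_lift_Inl lift_def)
next
  case (b S)
  thus ?thesis using x by (simp add: W_apply_lift_Inr lift_def algebra_simps)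
qed

definition incidence_kernel :: "nat \<Rightarrow> (nat set \<Rightarrow> real) \<Rightarrow> bool" where
  "incidence_kernel k z \<longleftrightarrow> (\<forall>i\<in>{1..k}. (\<Sum>S\<in>{S\<in>pairs k. i \<in> S}. z S) = 0)"

definition edge_fun :: "(nat set \<Rightarrow> real) \<Rightarrow> (nat + nat set) \<Rightarrow> real" where
  "edge_fun z v = (case v of Inl _ \<Rightarrow> 0 | Inr S \<Rightarrow> z S)"

(* Each pair lies in exactly two stars, so a kernel element has total zero. *)
lemma incidence_kernel_sum:
  assumes "incidence_kernel k z"
  shows "(\<Sum>S\<in>pairs k. z S) = 0"
proof -
  have "2 * (\<Sum>S\<in>pairs k. z S) = (\<Sum>S\<in>pairs k. psum (\<lambda>_. 1) S * z S)"
    by (simp add: sum_distrib_left psum_def pairs_def)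
  also have "\<dots> = 0" using assms by (simp add: sum_psum_swap incidence_kernel_def)
  finally show ?thesis by simp
qed

(* On the incidence kernel the adjacency operator acts as the identity: the Kneser part
   reproduces z by inclusion-exclusion and the a-part sees only vanishing star sums. *)
lemma edge_fun_eigen:
  assumes z: "incidence_kernel k z" and v: "v \<in> W_set k"
  shows "W_apply k (edge_fun z) v = edge_fun z v"
  using v
proof (cases rule: W_set_cases)
  case (a i)
  have "W_apply k (edge_fun z) v = (\<Sum>S\<in>{S\<in>pairs k. i \<in> S}. z S)"
    unfolding W_apply_def sum_W_set using a
    by (simp add: adj01_def edge_fun_def sum.inter_filter[symmetric] if_distrib[of "\<lambda>r. r * _"] cong: if_cong)
  thus ?thesis using z a by (simp add: incidence_kernel_def edge_fun_def)
next
  case (b S)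
  obtain p q where pq: "S = {p,q}" "1 \<le> p" "p < q" "q \<le> k" using b by (auto simp: pairs_iff)
  have "W_apply k (edge_fun z) v = (\<Sum>T\<in>{T\<in>pairs k. S \<inter> T = {}}. z T)"
    unfolding W_apply_def sum_W_set using b
    by (simp add: adj01_def edge_fun_def sum.inter_filter[symmetric] if_distrib[of "\<lambda>r. r * _"] cong: if_cong)
  also have "\<dots> = z S"
    unfolding sum_pairs_disjoint[OF pq(1) _ b(2), OF less_imp_neq[OF pq(3)]]
    using pq z incidence_kernel_sum[OF z] by (simp add: incidence_kernel_def)
  finally show ?thesis using b by (simp add: edge_fun_def)
qed

definition ip :: "nat \<Rightarrow> ((nat + nat set) \<Rightarrow> real) \<Rightarrow> ((nat + nat set) \<Rightarrow> real) \<Rightarrow> real" where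
  "ip k f g = (\<Sum>v\<in>W_set k. f v * g v)"

definition ipn :: "nat \<Rightarrow> (nat \<Rightarrow> real) \<Rightarrow> (nat \<Rightarrow> real) \<Rightarrow> real" where
  "ipn k x y = (\<Sum>i\<in>{1..k}. x i * y i)"

lemma ip_commute: "ip k f g = ip k g f"
  unfolding ip_def by (simp add: mult.commute)

lemma ipn_commute: "ipn k x y = ipn k y x"
  unfolding ipn_def by (simp add: mult.commute)

lemma sum_psum_psum:
  "(\<Sum>S\<in>pairs k. psum x S * psum y S) = (real k - 2) * ipn k x y + total k x * total k y"
proof -
  have "(\<Sum>S\<in>pairs k. psum x S * psum y S)
      = (\<Sum>t\<in>{1..k}. x t * ((real k - 2) * y t + total k y))"
    unfolding sum_psum_swap by (intro sum.cong refl) (simp add: sum_psum_containing)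
  also have "\<dots> = (\<Sum>t\<in>{1..k}. (real k - 2) * (x t * y t) + total k y * x t)"
    by (intro sum.cong refl) (simp add: algebra_simps)
  also have "\<dots> = (real k - 2) * ipn k x y + total k x * total k y"
    unfolding ipn_def total_def[of k x] by (simp only: sum.distrib sum_distrib_left mult.commute)
  finally show ?thesis .
qed

lemma ip_lift:
  "ip k (lift a c x) (lift a' c' y)
     = a * a' * ipn k x y + c * c' * ((real k - 2) * ipn k x y + total k x * total k y)"
proof -
  have "ip k (lift a c x) (lift a' c' y)
      = a * a' * ipn k x y + c * c' * (\<Sum>S\<in>pairs k. psum x S * psum y S)"
    unfolding ip_def sum_W_set by (simp add: lift_def ipn_def sum_distrib_left algebra_simps)
  thus ?thesis by (simp add: sum_psum_psum)
qed

lemma ip_lift_edge_fun: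
  assumes "incidence_kernel k z"
  shows "ip k (lift a c x) (edge_fun z) = 0"
proof -
  have "ip k (lift a c x) (edge_fun z) = c * (\<Sum>S\<in>pairs k. psum x S * z S)"
    unfolding ip_def sum_W_set by (simp add: lift_def edge_fun_def sum_distrib_left algebra_simps)
  also have "(\<Sum>S\<in>pairs k. psum x S * z S) = 0"
    using assms by (simp add: sum_psum_swap incidence_kernel_def)
  finally show ?thesis by simp
qed

(* base 1 is the constant weight; for m >= 2, base m has m - 1 ones followed by -(m - 1)
   (Helmert weights).  base 1, ..., base k is an orthogonal basis of the weights on {1..k},
   and base 2, ..., base k span the weights of total zero. *)
definition base :: "nat \<Rightarrow> nat \<Rightarrow> real" where
  "base m i = (if m = 1 then 1 else if i < m then 1 else if i = m then - (real m - 1) else 0)"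

lemma total_base:
  assumes "2 \<le> m" "m \<le> k"
  shows "total k (base m) = 0"
proof -
  have "total k (base m) = (\<Sum>i\<in>insert m {1..<m}. base m i)"
    unfolding total_def using assms by (intro sum.mono_neutral_right) (auto simp: base_def)
  also have "\<dots> = - (real m - 1) + (\<Sum>i\<in>{1..<m}. 1)"
    using assms by (simp add: base_def)
  finally show ?thesis using assms by (simp add: of_nat_diff)
qed

lemma ipn_base_less:
  assumes "1 \<le> m" "m < m'" "m' \<le> k"
  shows "ipn k (base m) (base m') = 0"
proof (cases "m = 1")
  case True
  hence "ipn k (base m) (base m') = total k (base m')" by (simp add: ipn_def total_def base_def[of "Suc 0"])
  thus ?thesis using assms total_base[of m' k] by simp
next
  case False
  have "ipn k (base m) (base m') = total k (base m)"
    unfolding ipn_def total_def using assms False by (intro sum.cong) (auto simp: base_def)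
  thus ?thesis using assms False total_base[of m k] by simp
qed

lemma ipn_base:
  assumes "m \<in> {1..k}" "m' \<in> {1..k}" "m \<noteq> m'"
  shows "ipn k (base m) (base m') = 0"
  using assms ipn_base_less[of m m' k] ipn_base_less[of m' m k] ipn_commute[of k "base m"]
  by (cases "m < m'") auto

lemma ipn_base_ge_1:
  assumes "m \<in> {1..k}"
  shows "ipn k (base m) (base m) \<ge> 1"
proof -
  have "base m 1 * base m 1 \<le> ipn k (base m) (base m)"
    unfolding ipn_def using assms by (intro member_le_sum) auto
  moreover have "base m 1 = 1" using assms by (simp add: base_def)
  ultimately show ?thesis by simp
qed

definition delta :: "nat set \<Rightarrow> nat set \<Rightarrow> real" where
  "delta R T = (if T = R then 1 else 0)"

(* For a pair S = {p,q} avoiding 1, the combination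
   [pq] - [1p] - [1q] + [12] + [13] - [23] of pairs has zero sum at every point of {1..k}.
   These vectors, S ranging over the pairs avoiding 1 other than {2,3}, span the
   incidence kernel. *)
definition cycle_vec :: "nat set \<Rightarrow> nat set \<Rightarrow> real" where
  "cycle_vec S T = delta S T - delta {1, Min S} T - delta {1, Max S} T
                   + delta {1,2} T + delta {1,3} T - delta {2,3} T"

lemma cycle_vec_kernel:
  assumes S: "S \<in> pairs k" "1 \<notin> S" and k: "k \<ge> 3"
  shows "incidence_kernel k (cycle_vec S)"
  unfolding incidence_kernel_def
proof
  fix i assume i: "i \<in> {1..k}"
  note P = pairs_without_1[OF S]
  define p q where "p = Min S" "q = Max S"
  have in_pairs: "{1, p} \<in> pairs k" "{1, q} \<in> pairs k" "{1,2} \<in> pairs k" "{1,3} \<in> pairs k" "{2,3} \<in> pairs k"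
    using P k unfolding p_q_def by (auto intro!: pair_in_pairs)
  have delta_star: "(\<Sum>T\<in>{T\<in>pairs k. i \<in> T}. delta R T) = (if i \<in> R then 1 else 0)"
    if "R \<in> pairs k" for R
    using that by (simp add: delta_def sum.delta)
  have "(\<Sum>T\<in>{T\<in>pairs k. i \<in> T}. cycle_vec S T) =
     (if i \<in> S then 1 else 0) - (if i \<in> {1,p} then 1 else 0) - (if i \<in> {1,q} then 1 else 0)
     + (if i \<in> {1,2} then 1 else 0) + (if i \<in> {1,3} then 1 else 0) - (if i \<in> {2,3} then 1 else 0)"
    unfolding cycle_vec_def p_q_def[symmetric] using in_pairs S
    by (simp add: sum.distrib sum_subtractf delta_star)
  also have "\<dots> = 0" using P unfolding p_q_def[symmetric]
    by (cases "i = 1"; cases "i = 2"; cases "i = 3"; auto)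
  finally show "(\<Sum>T\<in>{T\<in>pairs k. i \<in> T}. cycle_vec S T) = 0" .
qed

lemma cycle_vec_unit:
  assumes "1 \<notin> S" "S \<noteq> {2,3}"
  shows "cycle_vec T S = (if S = T then 1 else 0)"
  using assms unfolding cycle_vec_def delta_def by auto

definition lam_hi :: "nat \<Rightarrow> real" where
  "lam_hi k = upper_root (kneser_deg k + real k - 1) ((real k - 1) * (kneser_deg k - 2))"

definition lam_lo :: "nat \<Rightarrow> real" where
  "lam_lo k = lower_root (kneser_deg k + real k - 1) ((real k - 1) * (kneser_deg k - 2))"

definition mu_hi :: "nat \<Rightarrow> real" where
  "mu_hi k = upper_root (2 - real k) (- 1)"

definition mu_lo :: "nat \<Rightarrow> real" where
  "mu_lo k = lower_root (2 - real k) (- 1)"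

lemma lam_discriminant:
  assumes "k \<ge> 1"
  shows "4 * ((real k - 1) * (kneser_deg k - 2)) \<le> (kneser_deg k + real k - 1)\<^sup>2"
proof -
  have "(kneser_deg k + real k - 1)\<^sup>2 - 4 * ((real k - 1) * (kneser_deg k - 2))
      = (kneser_deg k - (real k - 1))\<^sup>2 + 8 * (real k - 1)"
    by (simp add: power2_eq_square algebra_simps)
  moreover have "0 \<le> (kneser_deg k - (real k - 1))\<^sup>2 + 8 * (real k - 1)" using assms by simp
  ultimately show ?thesis by linarith
qed

lemma mu_discriminant: "4 * (- 1) \<le> (2 - real k)\<^sup>2"
  using zero_le_power2[of "2 - real k"] by linarith

lemma lam_pos:
  assumes "k \<ge> 5"
  shows "0 < lam_lo k" "0 < lam_hi k"
proof -
  have "real k - 2 \<ge> 3" "real k - 3 \<ge> 2" using assms by auto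
  hence "(real k - 2) * (real k - 3) \<ge> 3 * 2" by (intro mult_mono) auto
  hence "kneser_deg k \<ge> 3" unfolding kneser_deg_def by simp
  thus "0 < lam_lo k" "0 < lam_hi k" unfolding lam_lo_def lam_hi_def
    using assms lam_discriminant[of k] by (auto intro!: roots_pos)
qed

lemma mu_sign: "mu_lo k < 0" "0 < mu_hi k"
  unfolding mu_lo_def mu_hi_def by (simp_all add: roots_sign)

lemma lam_coef_prod:
  assumes "k \<ge> 1"
  shows "(lam_hi k - kneser_deg k) * (lam_lo k - kneser_deg k) = - 2 * (real k - 1)"
proof -
  have "(lam_hi k - kneser_deg k) * (lam_lo k - kneser_deg k)
      = lam_hi k * lam_lo k - kneser_deg k * (lam_hi k + lam_lo k) + kneser_deg k * kneser_deg k"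
    by (simp add: algebra_simps)
  also have "\<dots> = - 2 * (real k - 1)"
    unfolding lam_hi_def lam_lo_def roots_sum roots_prod[OF lam_discriminant[OF assms]]
    by (simp add: algebra_simps)
  finally show ?thesis .
qed

lemma mu_coef_prod: "(mu_hi k + real k - 3) * (mu_lo k + real k - 3) = 2 - real k"
proof -
  have "(mu_hi k + real k - 3) * (mu_lo k + real k - 3)
      = mu_hi k * mu_lo k + (real k - 3) * (mu_hi k + mu_lo k) + (real k - 3) * (real k - 3)"
    by (simp add: algebra_simps)
  also have "\<dots> = 2 - real k"
  proof -
    have prod: "mu_hi k * mu_lo k = - 1"
      unfolding mu_hi_def mu_lo_def by (rule roots_prod[OF mu_discriminant])
    have sum: "mu_hi k + mu_lo k = 2 - real k" unfolding mu_hi_def mu_lo_def by (rule roots_sum)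
    show ?thesis unfolding prod sum by (simp add: algebra_simps)
  qed
  finally show ?thesis .
qed

(* The "lifted" vertices a_m and b_{partner m}
   (with partner 1 = {2,3} and partner m = {1,m} otherwise) carry the two lifts of base m; every
   other b_S carries the cycle vector of S. *)
definition lifted :: "(nat + nat set) \<Rightarrow> bool" where
  "lifted u = (case u of Inl _ \<Rightarrow> True | Inr S \<Rightarrow> 1 \<in> S \<or> S = {2,3})"

definition key :: "(nat + nat set) \<Rightarrow> nat" where
  "key u = (case u of Inl i \<Rightarrow> i | Inr S \<Rightarrow> if S = {2,3} then 1 else Max S)"

definition partner :: "nat \<Rightarrow> nat set" where
  "partner m = (if m = 1 then {2,3} else {1,m})"

definition eigval :: "nat \<Rightarrow> (nat + nat set) \<Rightarrow> real" where
  "eigval k u = (case u of Inl i \<Rightarrow> if i = 1 then lam_hi k else mu_hi k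
     | Inr S \<Rightarrow> if S = {2,3} then lam_lo k else if 1 \<in> S then mu_lo k else 1)"

(* The coefficient alpha making the lift an eigenvector (see lift_ones_eigen and
   lift_total_zero_eigen). *)
definition coef :: "nat \<Rightarrow> (nat + nat set) \<Rightarrow> real" where
  "coef k u = (if key u = 1 then eigval k u - kneser_deg k else eigval k u + real k - 3)"

definition eigvec :: "nat \<Rightarrow> (nat + nat set) \<Rightarrow> (nat + nat set) \<Rightarrow> real" where
  "eigvec k u = (if lifted u then lift (coef k u) 1 (base (key u)) else edge_fun (cycle_vec (projr u)))"

lemma partner_not_23: "m \<noteq> 1 \<Longrightarrow> partner m \<noteq> {2,3}"
  by (auto simp: partner_def doubleton_eq_iff)

lemma lifted_partner: "lifted (Inr (partner m))"
  by (simp add: lifted_def partner_def)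

lemma key_partner: "m \<ge> 1 \<Longrightarrow> key (Inr (partner m)) = m"
  using partner_not_23[of m] by (auto simp: key_def partner_def)

lemma eigval_Inl: "eigval k (Inl m) = (if m = 1 then lam_hi k else mu_hi k)"
  by (simp add: eigval_def)

lemma eigval_partner: "eigval k (Inr (partner m)) = (if m = 1 then lam_lo k else mu_lo k)"
  using partner_not_23[of m] by (auto simp: eigval_def partner_def)

lemma lifted_cases:
  assumes "u \<in> W_set k" "lifted u"
  obtains m where "m \<in> {1..k}" "key u = m" "u = Inl m \<or> u = Inr (partner m)"
  using assms(1)
proof (cases rule: W_set_cases)
  case (a i)
  then show ?thesis using that by (auto simp: key_def)
next
  case (b S)
  show ?thesis
  proof (cases "S = {2,3}")
    case True
    then show ?thesis using b that[of 1] by (auto simp: key_def partner_def pairs_def)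
  next
    case False
    hence "1 \<in> S" using assms(2) b by (simp add: lifted_def)
    note S = pairs_with_1[OF b(2) this]
    hence "partner (Max S) = S" by (simp add: partner_def)
    moreover have "key u = Max S" using b False by (simp add: key_def)
    ultimately show ?thesis using that[of "Max S"] b S by auto
  qed
qed

lemma eigvec_lifted:
  assumes "lifted u"
  shows "eigvec k u = lift (coef k u) 1 (base (key u))"
  using assms by (simp add: eigvec_def)

lemma eigvec_eigen:
  assumes k: "k \<ge> 5" and u: "u \<in> W_set k" and v: "v \<in> W_set k"
  shows "W_apply k (eigvec k u) v = eigval k u * eigvec k u v"
proof (cases "lifted u")
  case True
  then obtain m where m: "m \<in> {1..k}" "key u = m" "u = Inl m \<or> u = Inr (partner m)"
    using lifted_cases[OF u] by blast
  show ?thesis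
  proof (cases "m = 1")
    case True
    hence "eigval k u = lam_hi k \<or> eigval k u = lam_lo k"
      using m(3) by (auto simp: eigval_Inl eigval_partner)
    hence "(eigval k u)\<^sup>2 - (kneser_deg k + real k - 1) * eigval k u
             + (real k - 1) * (kneser_deg k - 2) = 0"
      using k by (intro root_equation lam_discriminant) (auto simp: lam_hi_def lam_lo_def)
    hence "W_apply k (lift (eigval k u - kneser_deg k) 1 (\<lambda>_. 1)) v
        = eigval k u * lift (eigval k u - kneser_deg k) 1 (\<lambda>_. 1) v"
      by (rule lift_ones_eigen[OF _ v])
    moreover have "base m = (\<lambda>_. 1)" using True by (auto simp: base_def)
    ultimately show ?thesis using \<open>lifted u\<close> True m(2) by (simp add: eigvec_def coef_def)
  next
    case False
    hence "eigval k u = mu_hi k \<or> eigval k u = mu_lo k"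
      using m(3) by (auto simp: eigval_Inl eigval_partner)
    hence "(eigval k u)\<^sup>2 - (2 - real k) * eigval k u + - 1 = 0"
      by (intro root_equation[OF mu_discriminant]) (auto simp: mu_hi_def mu_lo_def)
    hence "(eigval k u)\<^sup>2 + (real k - 2) * eigval k u = 1" by (simp add: algebra_simps)
    moreover have "total k (base m) = 0" using m False by (intro total_base) auto
    ultimately have "W_apply k (lift (eigval k u + real k - 3) 1 (base m)) v
        = eigval k u * lift (eigval k u + real k - 3) 1 (base m) v"
      by (intro lift_total_zero_eigen[OF _ _ v])
    thus ?thesis using \<open>lifted u\<close> False m(2) by (simp add: eigvec_def coef_def)
  qed
next
  case False
  then obtain S where S: "u = Inr S" "S \<in> pairs k" "1 \<notin> S" "S \<noteq> {2,3}"
    using u by (auto simp: W_set_def lifted_def)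
  thus ?thesis using edge_fun_eigen[OF cycle_vec_kernel[OF S(2,3)] v] k False
    by (simp add: eigvec_def eigval_def)
qed

(* The two lifts of the same base weight are orthogonal, by the product formulas for the
   coefficients. *)
lemma partner_orthogonal:
  assumes k: "k \<ge> 5" and m: "m \<in> {1..k}"
  shows "ip k (eigvec k (Inl m)) (eigvec k (Inr (partner m))) = 0"
proof -
  have keys: "key (Inl m) = m" "key (Inr (partner m)) = m"
    using m key_partner[of m] by (simp_all add: key_def)
  have ip: "ip k (eigvec k (Inl m)) (eigvec k (Inr (partner m)))
      = (coef k (Inl m) * coef k (Inr (partner m)) + (real k - 2)) * ipn k (base m) (base m)
        + total k (base m) * total k (base m)"
    using eigvec_lifted[of "Inl m" k] eigvec_lifted[OF lifted_partner, of k m]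
    by (simp add: lifted_def keys ip_lift algebra_simps)
  show ?thesis
  proof (cases "m = 1")
    case True
    have "coef k (Inl m) * coef k (Inr (partner m)) = - 2 * (real k - 1)"
      unfolding coef_def keys using True k lam_coef_prod[of k] by (simp add: eigval_Inl eigval_partner)
    moreover have "ipn k (base m) (base m) = real k" "total k (base m) = real k"
      using True by (simp_all add: base_def ipn_def total_def)
    ultimately show ?thesis unfolding ip by (simp only:) (simp add: algebra_simps)
  next
    case False
    have "coef k (Inl m) * coef k (Inr (partner m)) = 2 - real k"
      unfolding coef_def keys using False mu_coef_prod[of k] by (simp add: eigval_Inl eigval_partner)
    moreover have "total k (base m) = 0" using m False by (intro total_base) auto
    ultimately show ?thesis unfolding ip by simp
  qed
qed

lemma eigvec_orthogonal:
  assumes k: "k \<ge> 5" and u: "u \<in> W_set k" "lifted u" and w: "w \<in> W_set k" and uw: "u \<noteq> w"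
  shows "ip k (eigvec k u) (eigvec k w) = 0"
proof (cases "lifted w")
  case False
  from w obtain T where T: "w = Inr T" "T \<in> pairs k"
  proof (cases rule: W_set_cases)
    case (a i) thus ?thesis using False by (simp add: lifted_def)
  qed
  hence "1 \<notin> T" using False by (simp add: lifted_def)
  have "eigvec k w = edge_fun (cycle_vec T)" using False T(1) by (simp add: eigvec_def)
  moreover have "eigvec k u = lift (coef k u) 1 (base (key u))" by (rule eigvec_lifted[OF u(2)])
  ultimately show ?thesis using ip_lift_edge_fun[OF cycle_vec_kernel[OF T(2) \<open>1 \<notin> T\<close>]] k by simp
next
  case True
  obtain m where m: "m \<in> {1..k}" "key u = m" "u = Inl m \<or> u = Inr (partner m)"
    using lifted_cases[OF u] .
  obtain m' where m': "m' \<in> {1..k}" "key w = m'" "w = Inl m' \<or> w = Inr (partner m')"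
    using lifted_cases[OF w True] .
  have eu: "eigvec k u = lift (coef k u) 1 (base m)" using eigvec_lifted[OF u(2)] m(2) by simp
  have ew: "eigvec k w = lift (coef k w) 1 (base m')" using eigvec_lifted[OF True] m'(2) by simp
  show ?thesis
  proof (cases "m = m'")
    case False
    have "total k (base m) = 0 \<or> total k (base m') = 0"
    proof (cases "m = 1")
      case True thus ?thesis using m'(1) False by (intro disjI2 total_base) auto
    next
      case False thus ?thesis using m(1) by (intro disjI1 total_base) auto
    qed
    thus ?thesis unfolding eu ew ip_lift using ipn_base[OF m(1) m'(1) False] by auto
  next
    case True
    consider "u = Inl m" "w = Inr (partner m)" | "u = Inr (partner m)" "w = Inl m"
      using m(3) m'(3) uw True by blast
    thus ?thesis
    proof cases
      case 1 thus ?thesis using partner_orthogonal[OF k m(1)] by simp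
    next
      case 2 thus ?thesis using partner_orthogonal[OF k m(1)] ip_commute[of k "eigvec k u"] by simp
    qed
  qed
qed

(* Lifted members are nonzero: the Helmert weight has a nonzero first coordinate. *)
lemma eigvec_norm_pos:
  assumes k: "k \<ge> 5" and u: "u \<in> W_set k" "lifted u"
  shows "ip k (eigvec k u) (eigvec k u) > 0"
proof -
  obtain m where m: "m \<in> {1..k}" "key u = m" using lifted_cases[OF u] by blast
  let ?n = "ipn k (base m) (base m)"
  have "ip k (eigvec k u) (eigvec k u) = (coef k u)\<^sup>2 * ?n + ((real k - 2) * ?n + (total k (base m))\<^sup>2)"
    using u m(2) by (simp add: eigvec_lifted ip_lift power2_eq_square)
  moreover have "?n \<ge> 1" using m(1) by (rule ipn_base_ge_1)
  moreover have "0 \<le> (coef k u)\<^sup>2 * ?n" using \<open>?n \<ge> 1\<close> by simp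
  moreover have "0 < (real k - 2) * ?n" using k \<open>?n \<ge> 1\<close> by simp
  moreover have "0 \<le> (total k (base m))\<^sup>2" by simp
  ultimately show ?thesis by linarith
qed

lemma eigvec_unit:
  assumes u: "\<not> lifted u" and w: "\<not> lifted w"
  shows "eigvec k w u = (if u = w then 1 else 0)"
proof -
  obtain S where S: "u = Inr S" "1 \<notin> S" "S \<noteq> {2,3}"
    using u by (cases u) (auto simp: lifted_def)
  obtain T where T: "w = Inr T" using w by (cases w) (auto simp: lifted_def)
  show ?thesis using S T w cycle_vec_unit[OF S(2,3), of T] by (simp add: eigvec_def edge_fun_def)
qed

lemma eigvec_independent:
  assumes k: "k \<ge> 5" and comb: "\<forall>v\<in>W_set k. (\<Sum>u\<in>W_set k. c u * eigvec k u v) = 0"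
  shows "\<forall>u\<in>W_set k. c u = 0"
proof (rule independent_if_orthogonal_or_unit[where G = lifted, OF _ _ _ comb finite_W_set])
  fix u w assume "u \<in> W_set k" "w \<in> W_set k" "lifted u" "u \<noteq> w"
  thus "(\<Sum>v\<in>W_set k. eigvec k u v * eigvec k w v) = 0"
    using eigvec_orthogonal[OF k] unfolding ip_def by blast
next
  fix u assume "u \<in> W_set k" "lifted u"
  thus "(\<Sum>v\<in>W_set k. eigvec k u v * eigvec k u v) > 0"
    using eigvec_norm_pos[OF k] unfolding ip_def by blast
next
  fix u w assume "\<not> lifted u" "\<not> lifted w"
  thus "eigvec k w u = (if u = w then 1 else 0)" by (rule eigvec_unit)
qed

lemma nonpos_eigval_vertices:
  assumes k: "k \<ge> 5"
  shows "{u\<in>W_set k. eigval k u \<le> 0} = Inr ` {S\<in>pairs k. 1 \<in> S}"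
proof (intro equalityI subsetI)
  fix u assume "u \<in> {u\<in>W_set k. eigval k u \<le> 0}"
  hence u: "u \<in> W_set k" and ev: "eigval k u \<le> 0" by auto
  from u show "u \<in> Inr ` {S\<in>pairs k. 1 \<in> S}"
  proof (cases rule: W_set_cases)
    case (a i)
    have False using a ev lam_pos[OF k] mu_sign[of k] by (simp add: eigval_def split: if_splits)
    thus ?thesis ..
  next
    case (b S)
    have "1 \<in> S" using b ev lam_pos[OF k] by (simp add: eigval_def split: if_splits)
    thus ?thesis using b by blast
  qed
next
  fix u :: "nat + nat set" assume "u \<in> Inr ` {S\<in>pairs k. 1 \<in> S}"
  then obtain S where S: "u = Inr S" "S \<in> pairs k" "1 \<in> S" by auto
  have "S \<noteq> {2,3}" using S by auto
  hence "eigval k u \<le> 0" using S mu_sign[of k] by (simp add: eigval_def)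
  moreover have "u \<in> W_set k" using S by (simp add: W_set_def)
  ultimately show "u \<in> {u\<in>W_set k. eigval k u \<le> 0}" by simp
qed

lemma card_nonpos_eigval_vertices:
  assumes k: "k \<ge> 5"
  shows "card {u\<in>W_set k. eigval k u \<le> 0} = k - 1"
proof -
  have "card (Inr ` {S\<in>pairs k. 1 \<in> S} :: (nat + nat set) set) = card {S\<in>pairs k. 1 \<in> S}"
    by (rule card_image) simp
  also have "\<dots> = k - 1" using k by (intro card_pairs_containing) simp
  finally show ?thesis unfolding nonpos_eigval_vertices[OF k] .
qed

lemma set_pairs_list:
  "set [(i,j). i \<leftarrow> [a..<b], j \<leftarrow> [i+1..<c]] = {(i,j). a \<le> i \<and> i < b \<and> i < j \<and> j < c}"
  by auto

lemma distinct_pairs_list: "distinct [(i,j). i \<leftarrow> [a..<b], j \<leftarrow> [i+1..<c]]"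
proof (induction b)
  case 0 thus ?case by simp
next
  case (Suc b)
  show ?case
  proof (cases "a \<le> b")
    case False
    thus ?thesis by simp
  next
    case True
    hence "[a..<Suc b] = [a..<b] @ [b]" by simp
    moreover have "distinct (map (Pair b) [b+1..<c])" by (simp add: distinct_map inj_on_def)
    moreover have "set [(i,j). i \<leftarrow> [a..<b], j \<leftarrow> [i+1..<c]] \<inter> set (map (Pair b) [b+1..<c]) = {}"
      unfolding set_pairs_list by auto
    ultimately show ?thesis using Suc.IH by simp
  qed
qed

lemma set_W_vertices: "set (W_vertices k) = W_set k"
proof -
  define L where "L = [(i,j). i \<leftarrow> [1..<k+1], j \<leftarrow> [i+1..<k+1]]"
  have L: "set L = {(i,j). 1 \<le> i \<and> i < k+1 \<and> i < j \<and> j < k+1}"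
    unfolding L_def by (rule set_pairs_list)
  have "set (W_vertices k) = Inl ` {1..<k+1} \<union> (\<lambda>(i,j). Inr {i,j}) ` set L"
    unfolding W_vertices_def L_def[symmetric] set_append set_map set_upt ..
  also have "{1..<k+1} = {1..k}" by auto
  also have "(\<lambda>(i,j). Inr {i,j}) ` set L = (Inr ` pairs k :: (nat + nat set) set)"
  proof (intro equalityI subsetI)
    fix x :: "nat + nat set" assume "x \<in> (\<lambda>(i,j). Inr {i,j}) ` set L"
    then obtain i j where "(i,j) \<in> set L" "x = Inr {i,j}" by auto
    hence "1 \<le> i" "i < j" "j \<le> k" "x = Inr {i,j}" unfolding L by auto
    thus "x \<in> Inr ` pairs k" using pair_in_pairs by blast
  next
    fix x :: "nat + nat set" assume "x \<in> Inr ` pairs k"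
    then obtain S where "S \<in> pairs k" "x = Inr S" by blast
    then obtain i j where ij: "x = Inr {i,j}" "1 \<le> i" "i < j" "j \<le> k" unfolding pairs_iff by blast
    hence "(i,j) \<in> set L" unfolding L by simp
    thus "x \<in> (\<lambda>(i,j). Inr {i,j}) ` set L" using ij(1) by (intro image_eqI[of _ _ "(i,j)"]) auto
  qed
  finally show ?thesis unfolding W_set_def .
qed

lemma distinct_W_vertices: "distinct (W_vertices k)"
proof -
  define L where "L = [(i,j). i \<leftarrow> [1..<k+1], j \<leftarrow> [i+1..<k+1]]"
  have "inj_on (\<lambda>(i,j). Inr {i,j} :: nat + nat set) (set L)"
    unfolding L_def set_pairs_list by (auto simp: inj_on_def doubleton_eq_iff)
  moreover have "distinct L" unfolding L_def by (rule distinct_pairs_list)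
  ultimately have "distinct (map (\<lambda>(i,j). Inr {i,j} :: nat + nat set) L)"
    by (simp add: distinct_map)
  moreover have "distinct (map Inl [1..<k+1] :: (nat + nat set) list)" by (simp add: distinct_map)
  ultimately show ?thesis unfolding W_vertices_def L_def[symmetric] by auto
qed

theorem mainTheorem11:
  fixes k :: nat
  assumes "k \<ge> 5"
  shows "num_nonpos_eigenvalues (W_adj_mat k) = k - 1"
proof -
  let ?vs = "W_vertices k"
  have "W_adj_mat k = mat (length ?vs) (length ?vs) (\<lambda>(i,j). adj01 (?vs ! i) (?vs ! j))"
    unfolding W_adj_mat_def adj01_def Let_def ..
  also have "num_nonpos_eigenvalues \<dots> = card {u\<in>set ?vs. eigval k u \<le> 0}"
  proof (rule num_nonpos_eigenvalues_eigenbasis[where f = "eigvec k"])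
    show "distinct ?vs" by (rule distinct_W_vertices)
  next
    fix u v assume "u \<in> set ?vs" "v \<in> set ?vs"
    thus "(\<Sum>w\<in>set ?vs. adj01 v w * eigvec k u w) = eigval k u * eigvec k u v"
      using eigvec_eigen[OF assms] unfolding set_W_vertices W_apply_def by blast
  next
    fix c assume "\<forall>v\<in>set ?vs. (\<Sum>u\<in>set ?vs. c u * eigvec k u v) = 0"
    thus "\<forall>u\<in>set ?vs. c u = 0" using eigvec_independent[OF assms] unfolding set_W_vertices by blast
  qed
  also have "\<dots> = k - 1" unfolding set_W_vertices by (rule card_nonpos_eigval_vertices[OF assms])
  finally show ?thesis .
qed

end
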